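(* In the mirror triangle method with inexact directional derivatives (see context), let $\mathbb{E}_{k+1}$ denote conditional expectation over the randomness of iteration $k+1$ given iterations $1,\dots,k$. For every $u\in\mathbb{R}^n$ and $k\ge0$, with $R_k=\|u_k-u\|_L$ and $M_k=\|\nabla f(y_{k+1})\|_2$, $$\alpha_{k+1}\langle\nabla f(y_{k+1}),u_k-u\rangle\le A_{k+1}\big(f(y_{k+1})-\mathbb{E}_{k+1}f(x_{k+1})\big)+V(u,u_k)-\mathbb{E}_{k+1}V(u,u_{k+1})+\frac{A_{k+1}}L\delta^2+A_{k+1}\delta\frac{M_k}{L\sqrt n}+\alpha_{k+1}\delta\frac{\sqrt n}{\sqrt L}R_k.$$
   Context: $f:\mathbb{R}^n\to\mathbb{R}$ is convex, differentiable, with $\|\nabla f(x)-\nabla f(y)\|_2\le L\|x-y\|_2$. $\|x\|_L^2=L\sum_ix_i^2$ and $V(x,y)=\frac12\|x-y\|_L^2$. For each $k\ge0$, $e_{k+1}$ is a random vector on the Euclidean unit sphere such that, conditionally on the previous iterations, $\mathbb{E}[e_{k+1}^ie_{k+1}^j]=0$ for $i\ne j$ and $\mathbb{E}[(e_{k+1}^i)^2]=\frac1n$; $\tilde\delta_{k+1}$ is a random real with $|\tilde\delta_{k+1}|\le\delta$; $\tilde\nabla f(y)=n(\langle\nabla f(y),e_{k+1}\rangle+\tilde\delta_{k+1})e_{k+1}$. Method: $x_0=u_0=y_0$, $\alpha_0=1-\frac1n$, $A_0=\alpha_0$; for $k\ge0$: $\alpha_{k+1}=\frac{k+2n}{2n^2}$,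 $A_{k+1}=A_k+\alpha_{k+1}$, $y_{k+1}=\frac{\alpha_{k+1}u_k+A_kx_k}{A_{k+1}}$, $u_{k+1}=\arg\min_{x\in\mathbb{R}^n}\{V(x,u_k)+\alpha_{k+1}\langle\tilde\nabla f(y_{k+1}),x\rangle\}$, $x_{k+1}=y_{k+1}+n\frac{\alpha_{k+1}}{A_{k+1}}(u_{k+1}-u_k)$. *)

theory Defs
  imports "HOL-Analysis.Analysis" "HOL-Probability.Probability"
begin

definition alpha :: "nat \<Rightarrow> nat \<Rightarrow> real" where
  "alpha n m = (if m = 0 then 1 - 1 / real n else (real (m - 1) + 2 * real n) / (2 * (real n)^2))"

definition Aseq :: "nat \<Rightarrow> nat \<Rightarrow> real" where
  "Aseq n k = (\<Sum>j\<le>k. alpha n j)"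

definition normL :: "real \<Rightarrow> real^'n \<Rightarrow> real" where
  "normL L x = sqrt (L * (\<Sum>i\<in>UNIV. (x $ i)^2))"

definition Vdiv :: "real \<Rightarrow> real^'n \<Rightarrow> real^'n \<Rightarrow> real" where
  "Vdiv L x y = (1/2) * (normL L (x - y))^2"

definition tgrad :: "(real^'n \<Rightarrow> real^'n) \<Rightarrow> real^'n \<Rightarrow> real^'n \<Rightarrow> real \<Rightarrow> real^'n" where
  "tgrad df y e d = (real CARD('n) * (df y \<bullet> e + d)) *\<^sub>R e"

definition ynext :: "real \<Rightarrow> (real^'n \<Rightarrow> real^'n) \<Rightarrow> nat \<Rightarrow> real^'n \<Rightarrow> real^'n \<Rightarrow> real^'n" where
  "ynext L df k x u = (1 / Aseq CARD('n) (Suc k)) *\<^sub>R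
      (alpha CARD('n) (Suc k) *\<^sub>R u + Aseq CARD('n) k *\<^sub>R x)"

definition unext :: "real \<Rightarrow> (real^'n \<Rightarrow> real^'n) \<Rightarrow> nat \<Rightarrow> real^'n \<Rightarrow> real^'n \<Rightarrow> real^'n \<Rightarrow> real \<Rightarrow> real^'n" where
  "unext L df k x u e d =
     arg_min (\<lambda>z. Vdiv L z u + alpha CARD('n) (Suc k) * (tgrad df (ynext L df k x u) e d \<bullet> z)) (\<lambda>_. True)"

definition xnext :: "real \<Rightarrow> (real^'n \<Rightarrow> real^'n) \<Rightarrow> nat \<Rightarrow> real^'n \<Rightarrow> real^'n \<Rightarrow> real^'n \<Rightarrow> real \<Rightarrow> real^'n" where
  "xnext L df k x u e d = ynext L df k x u +
     (real CARD('n) * alpha CARD('n) (Suc k) / Aseq CARD('n) (Suc k)) *\<^sub>R (unext L df k x u e d - u)"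

text \<open>Trajectory (x_k, u_k) driven by realisations es (Suc k) = e_{k+1}, ds (Suc k) = tilde delta_{k+1}.\<close>
fun traj :: "real \<Rightarrow> (real^'n \<Rightarrow> real^'n) \<Rightarrow> real^'n \<Rightarrow> (nat \<Rightarrow> real^'n) \<Rightarrow> (nat \<Rightarrow> real)
              \<Rightarrow> nat \<Rightarrow> (real^'n) \<times> (real^'n)" where
  "traj L df x0 es ds 0 = (x0, x0)"
| "traj L df x0 es ds (Suc k) =
     (let (x, u) = traj L df x0 es ds k in
       (xnext L df k x u (es (Suc k)) (ds (Suc k)), unext L df k x u (es (Suc k)) (ds (Suc k))))"

end

theory Submission
  imports Defs
begin

text \<open>
  The mirror step is explicit: \<open>u' = u\<^sub>k - (\<alpha>/L) g\<^sup>~\<close> with \<open>g\<^sup>~ = n (\<langle>\<nabla>f(y), e\<rangle> + \<delta>\<^sup>~) e\<close>,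
  hence \<open>x' = y - (n \<alpha>\<^sup>2/(A L)) g\<^sup>~\<close>. For each realisation of \<open>(e, \<delta>\<^sup>~)\<close> the descent
  lemma bounds \<open>f(x')\<close>, \<open>V(u, u')\<close> expands exactly, and the step-size condition
  \<open>n\<^sup>2 \<alpha>\<^sup>2 \<le> A\<close> lets the quadratic term of the expansion absorb that of the descent lemma.
  What remains is \<open>\<alpha> n \<langle>\<nabla>f(y), e\<rangle> \<langle>u - u\<^sub>k, e\<rangle>\<close>, whose expectation is
  \<open>\<alpha> \<langle>\<nabla>f(y), u - u\<^sub>k\<rangle>\<close> by isotropy of \<open>e\<close>, plus noise terms bounded through \<open>|\<delta>\<^sup>~| \<le> \<delta>\<close>
  and \<open>\<bbbE> |\<langle>w, e\<rangle>| \<le> \<parallel>w\<parallel>\<^sub>2 / \<surd>n\<close>.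
\<close>

lemma lipschitz_gradient_quadratic_upper_bound:
  fixes f :: "'a::real_inner \<Rightarrow> real"
  assumes grad: "\<And>x. (f has_derivative (\<lambda>h. df x \<bullet> h)) (at x)"
    and lip: "\<And>x y. norm (df x - df y) \<le> L * norm (x - y)"
  shows "f (y + h) \<le> f y + df y \<bullet> h + L/2 * (norm h)^2"
proof -
  define \<psi> where "\<psi> t = f (y + t *\<^sub>R h) - t * (df y \<bullet> h) - L/2 * t^2 * (norm h)^2" for t
  have deriv: "DERIV \<psi> t :> (df (y + t *\<^sub>R h) \<bullet> h - df y \<bullet> h - L * t * (norm h)^2)" for t
  proof -
    have "((\<lambda>t. y + t *\<^sub>R h) has_derivative (\<lambda>s. s *\<^sub>R h)) (at t)"
      by (auto intro!: derivative_eq_intros)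
    from has_derivative_compose[OF this grad]
    have f_deriv: "((\<lambda>t. f (y + t *\<^sub>R h)) has_real_derivative (df (y + t *\<^sub>R h) \<bullet> h)) (at t)"
      unfolding has_field_derivative_def by (simp add: mult.commute[of _ "df (y + t *\<^sub>R h) \<bullet> h"])
    show ?thesis unfolding \<psi>_def
      by (rule derivative_eq_intros f_deriv | simp)+
  qed
  have "\<psi> 1 \<le> \<psi> 0"
  proof (rule DERIV_nonpos_imp_nonincreasing[of 0 1])
    fix t :: real assume t: "0 \<le> t" "t \<le> 1"
    have "(df (y + t *\<^sub>R h) - df y) \<bullet> h \<le> norm (df (y + t *\<^sub>R h) - df y) * norm h"
      by (rule norm_cauchy_schwarz)
    also have "\<dots> \<le> L * norm (t *\<^sub>R h) * norm h"
      using lip[of "y + t *\<^sub>R h" y] by (intro mult_right_mono) auto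
    also have "\<dots> = L * t * (norm h)^2" using t by (simp add: power2_eq_square)
    finally show "\<exists>y'. DERIV \<psi> t :> y' \<and> y' \<le> 0"
      using deriv[of t] by (auto simp: inner_diff_left)
  qed simp
  then show ?thesis unfolding \<psi>_def by simp
qed

lemma Vdiv_self [simp]: "Vdiv L x x = 0"
  by (simp add: Vdiv_def normL_def)

lemma Vdiv_nonneg: "Vdiv L x y \<ge> 0"
  by (simp add: Vdiv_def)

lemma normL_eq_norm:
  assumes "L \<ge> 0"
  shows "normL L (x::real^'n) = sqrt L * norm x"
proof -
  have "(\<Sum>i\<in>UNIV. (x $ i)^2) = (norm x)^2"
    by (simp only: power2_norm_eq_inner) (simp add: inner_vec_def power2_eq_square)
  with assms show ?thesis unfolding normL_def by (simp add: real_sqrt_mult)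
qed

lemma Vdiv_eq_norm: "L \<ge> 0 \<Longrightarrow> Vdiv L x (y::real^'n) = L/2 * (norm (x - y))^2"
  unfolding Vdiv_def by (simp add: normL_eq_norm power_mult_distrib)

lemma Vdiv_diff_scaleR:
  fixes u v e :: "real^'n"
  assumes "L \<ge> 0"
  shows "Vdiv L u (v - s *\<^sub>R e) = Vdiv L u v + L * s * ((u - v) \<bullet> e) + L/2 * s^2 * (norm e)^2"
proof -
  have "Vdiv L u (v - s *\<^sub>R e) = L/2 * (norm ((u - v) + s *\<^sub>R e))^2"
    using assms by (simp add: Vdiv_eq_norm algebra_simps)
  also have "(norm ((u - v) + s *\<^sub>R e))^2 = (norm (u - v))^2 + 2 * s * ((u - v) \<bullet> e) + s^2 * (norm e)^2"
    by (simp only: power2_norm_eq_inner) (simp add: inner_add_left inner_add_right inner_commute power2_eq_square)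
  finally show ?thesis using assms by (simp add: Vdiv_eq_norm distrib_left)
qed

lemma arg_min_Vdiv_plus_linear:
  fixes u t :: "real^'n"
  assumes L: "L > 0"
  shows "arg_min (\<lambda>z. Vdiv L z u + a * (t \<bullet> z)) (\<lambda>_. True) = u - (a / L) *\<^sub>R t"
proof -
  define z0 where "z0 = u - (a / L) *\<^sub>R t"
  define \<Phi> where "\<Phi> z = Vdiv L z u + a * (t \<bullet> z)" for z
  define C where "C = a * (t \<bullet> z0) + a^2 / (2 * L) * (norm t)^2"
  have completed_square: "\<Phi> z = Vdiv L z z0 + C" for z
  proof -
    have "Vdiv L z u = Vdiv L z (z0 - (- (a / L)) *\<^sub>R t)" unfolding z0_def by simp
    also have "\<dots> = Vdiv L z z0 - a * ((z - z0) \<bullet> t) + a^2 / (2 * L) * (norm t)^2"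
      using Vdiv_diff_scaleR[of L z z0 "- (a / L)" t] L by (simp add: power_divide power2_eq_square)
    finally show ?thesis
      unfolding \<Phi>_def C_def
      by (simp add: inner_diff_right inner_commute[of z t] inner_commute[of z0 t] algebra_simps)
  qed
  have "\<Phi> (arg_min \<Phi> (\<lambda>_. True)) = \<Phi> z0"
  proof (rule arg_min_equality)
    show "\<Phi> z0 \<le> \<Phi> z" for z
      unfolding completed_square by (simp add: Vdiv_nonneg)
  qed simp
  then have "Vdiv L (arg_min \<Phi> (\<lambda>_. True)) z0 = 0"
    by (simp add: completed_square)
  then show ?thesis unfolding \<Phi>_def z0_def using L by (simp add: Vdiv_eq_norm)
qed

lemma unext_eq:
  fixes x v e :: "real^'n"
  assumes "L > 0"
  shows "unext L df k x v e d
    = v - (alpha CARD('n) (Suc k) * real CARD('n) * (df (ynext L df k x v) \<bullet> e + d) / L) *\<^sub>R e"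
proof -
  have "unext L df k x v e d = v - (alpha CARD('n) (Suc k) / L) *\<^sub>R tgrad df (ynext L df k x v) e d"
    unfolding unext_def by (rule arg_min_Vdiv_plus_linear[OF assms])
  then show ?thesis by (simp add: tgrad_def ac_simps)
qed

lemma xnext_eq:
  fixes x v e :: "real^'n"
  assumes "L > 0"
  shows "xnext L df k x v e d = ynext L df k x v
    - ((real CARD('n) * alpha CARD('n) (Suc k))^2 * (df (ynext L df k x v) \<bullet> e + d)
        / (Aseq CARD('n) (Suc k) * L)) *\<^sub>R e"
  unfolding xnext_def unext_eq[OF assms] by (simp add: power2_eq_square ac_simps)

lemma Aseq_closed_form:
  "n > 0 \<Longrightarrow> 4 * (real n)^2 * Aseq n m = 4 * (real n)^2 - 4 * real n + real m * (real m - 1) + 4 * real n * real m"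
proof (induction m)
  case 0
  then show ?case by (simp add: Aseq_def alpha_def field_simps power2_eq_square)
next
  case (Suc m)
  have "Aseq n (Suc m) = Aseq n m + alpha n (Suc m)" unfolding Aseq_def by simp
  with Suc show ?case by (simp add: alpha_def field_simps power2_eq_square)
qed

lemma alpha_Suc_pos: "n > 0 \<Longrightarrow> alpha n (Suc k) > 0"
  unfolding alpha_def by (simp add: divide_pos_pos add_nonneg_pos)

lemma alpha_Suc_sq_le_Aseq: "n > 0 \<Longrightarrow> (real n * alpha n (Suc k))^2 \<le> Aseq n (Suc k)"
proof -
  assume n: "n > 0"
  define r where "r = real n"
  have r: "r > 0" using n by (simp add: r_def)
  have alpha: "alpha n (Suc k) = (real k + 2 * r) / (2 * r^2)" by (simp add: alpha_def r_def)
  have "4 * r^2 * Aseq n (Suc k) = (real k + 2 * r)^2 + real k"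
    using Aseq_closed_form[OF n, of "Suc k"] by (simp add: r_def algebra_simps power2_eq_square)
  moreover have "4 * r^2 * (r * alpha n (Suc k))^2 = (real k + 2 * r)^2"
    unfolding alpha using r by (simp add: field_simps power2_eq_square)
  ultimately have "4 * r^2 * (r * alpha n (Suc k))^2 \<le> 4 * r^2 * Aseq n (Suc k)" by simp
  then show ?thesis unfolding r_def by (rule mult_left_le_imp_le) (use n in simp)
qed

lemma Aseq_Suc_pos: "n > 0 \<Longrightarrow> Aseq n (Suc k) > 0"
proof -
  assume n: "n > 0"
  then have "0 < (real n * alpha n (Suc k))^2" using alpha_Suc_pos[OF n, of k] by simp
  with alpha_Suc_sq_le_Aseq[OF n, of k] show ?thesis by linarith
qed

lemma integrable_continuous_AE_compact:
  fixes h :: "'a::topological_space \<Rightarrow> 'b::{banach, second_countable_topology}"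
  assumes "finite_measure M" "sets M = sets borel" "compact S" "AE x in M. x \<in> S"
    and "continuous_on UNIV h"
  shows "integrable M h"
proof -
  interpret finite_measure M by fact
  obtain B where B: "\<And>x. x \<in> S \<Longrightarrow> norm (h x) \<le> B"
    using compact_imp_bounded[OF compact_continuous_image[OF continuous_on_subset[OF assms(5)] assms(3)]]
    by (auto simp: bounded_iff)
  have "h \<in> borel_measurable M"
    using borel_measurable_continuous_onI[OF assms(5)] by (simp add: measurable_cong_sets[OF assms(2) refl])
  moreover have "AE x in M. norm (h x) \<le> B"
    using assms(4) by eventually_elim (rule B)
  ultimately show ?thesis by (intro integrable_const_bound)
qed

lemma integrable_continuous_sphere_times_cball:
  fixes M :: "((real^'n) \<times> real) measure" and h :: "(real^'n) \<times> real \<Rightarrow> real"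
  assumes "prob_space M" and "sets M = sets borel"
    and "AE p in M. norm (fst p) = 1" and "AE p in M. \<bar>snd p\<bar> \<le> \<delta>"
    and "continuous_on UNIV h"
  shows "integrable M h"
proof (rule integrable_continuous_AE_compact[OF _ assms(2) _ _ assms(5)])
  show "finite_measure M"
    using assms(1) by (simp add: prob_space_def)
  show "compact (sphere (0::real^'n) 1 \<times> cball (0::real) \<delta>)"
    by (intro compact_Times compact_sphere compact_cball)
  show "AE p in M. p \<in> sphere 0 1 \<times> cball 0 \<delta>"
    using assms(3,4) by eventually_elim (auto simp: mem_Times_iff)
qed

lemma inner_mult_inner_eq_double_sum:
  "(v \<bullet> x) * (w \<bullet> x) = (\<Sum>i\<in>UNIV. \<Sum>j\<in>UNIV. (v $ i * w $ j) * (x $ i * x $ j))"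
  for v w x :: "real^'n"
  unfolding inner_vec_def by (simp add: sum_product algebra_simps)

lemma integrable_inner_mult_inner:
  fixes X :: "'a \<Rightarrow> real^'n"
  assumes "\<And>i j. integrable M (\<lambda>p. X p $ i * X p $ j)"
  shows "integrable M (\<lambda>p. (v \<bullet> X p) * (w \<bullet> X p))"
  unfolding inner_mult_inner_eq_double_sum using assms by auto

lemma integral_inner_mult_inner:
  fixes X :: "'a \<Rightarrow> real^'n"
  assumes int: "\<And>i j. integrable M (\<lambda>p. X p $ i * X p $ j)"
    and orth: "\<And>i j. i \<noteq> j \<Longrightarrow> (\<integral>p. X p $ i * X p $ j \<partial>M) = 0"
    and var: "\<And>i. (\<integral>p. (X p $ i)^2 \<partial>M) = 1 / real CARD('n)"
  shows "(\<integral>p. (v \<bullet> X p) * (w \<bullet> X p) \<partial>M) = (v \<bullet> w) / real CARD('n)"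
proof -
  have moments: "(\<integral>p. X p $ i * X p $ j \<partial>M) = (if i = j then 1 / real CARD('n) else 0)" for i j
    using orth[of i j] var[of i] by (auto simp: power2_eq_square)
  have "(\<integral>p. (v \<bullet> X p) * (w \<bullet> X p) \<partial>M)
      = (\<Sum>i\<in>UNIV. \<Sum>j\<in>UNIV. (v $ i * w $ j) * (\<integral>p. X p $ i * X p $ j \<partial>M))"
    unfolding inner_mult_inner_eq_double_sum using int by (simp add: Bochner_Integration.integral_sum)
  also have "\<dots> = (\<Sum>i\<in>UNIV. v $ i * w $ i / real CARD('n))"
    unfolding moments by (simp add: if_distrib sum.delta cong: if_cong)
  also have "\<dots> = (v \<bullet> w) / real CARD('n)"
    unfolding inner_vec_def by (simp add: sum_divide_distrib)
  finally show ?thesis .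
qed

lemma integral_abs_inner_le:
  fixes X :: "'a \<Rightarrow> real^'n"
  assumes "prob_space M"
    and int: "\<And>i j. integrable M (\<lambda>p. X p $ i * X p $ j)"
    and orth: "\<And>i j. i \<noteq> j \<Longrightarrow> (\<integral>p. X p $ i * X p $ j \<partial>M) = 0"
    and var: "\<And>i. (\<integral>p. (X p $ i)^2 \<partial>M) = 1 / real CARD('n)"
    and int_abs: "integrable M (\<lambda>p. \<bar>v \<bullet> X p\<bar>)"
  shows "(\<integral>p. \<bar>v \<bullet> X p\<bar> \<partial>M) \<le> norm v / sqrt (real CARD('n))"
proof (cases "v = 0")
  case False
  interpret prob_space M by fact
  define G where "G = norm v"
  define r where "r = sqrt (real CARD('n))"
  have G: "G > 0" and r: "r > 0" using False by (auto simp: G_def r_def)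
  \<comment> \<open>Young's inequality, weighted to be tight at the root mean square \<open>G/r\<close> of \<open>v \<bullet> X\<close>.\<close>
  have young: "\<bar>c\<bar> \<le> r / (2 * G) * (c * c) + G / (2 * r)" for c
  proof -
    have "0 \<le> (r * \<bar>c\<bar> - G)^2" by simp
    then have "2 * r * G * \<bar>c\<bar> \<le> r^2 * (c * c) + G^2" by (simp add: power2_eq_square algebra_simps)
    then show ?thesis using G r by (simp add: field_simps power2_eq_square)
  qed
  have "(\<integral>p. \<bar>v \<bullet> X p\<bar> \<partial>M) \<le> (\<integral>p. r / (2 * G) * ((v \<bullet> X p) * (v \<bullet> X p)) + G / (2 * r) \<partial>M)"
    using integrable_inner_mult_inner[OF int] by (intro integral_mono int_abs young) auto
  also have "\<dots> = r / (2 * G) * (G^2 / r^2) + G / (2 * r)"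
    using integrable_inner_mult_inner[OF int] integral_inner_mult_inner[OF int orth var]
    by (simp add: G_def r_def power2_norm_eq_inner prob_space)
  also have "\<dots> = G / r" using G r by (simp add: field_simps power2_eq_square)
  finally show ?thesis unfolding G_def r_def .
qed simp

lemma Vdiv_unext_eq:
  fixes df :: "real^'n \<Rightarrow> real^'n" and x v u e :: "real^'n" and k :: nat
  assumes L: "L > 0" and e: "norm e = 1"
  defines "y \<equiv> ynext L df k x v" and "n \<equiv> real CARD('n)" and "a \<equiv> alpha CARD('n) (Suc k)"
  shows "Vdiv L u (unext L df k x v e d)
    = Vdiv L u v + a * n * (df y \<bullet> e + d) * ((u - v) \<bullet> e) + (n * a)^2 / (2 * L) * (df y \<bullet> e + d)^2"
proof -
  define s where "s = a * n * (df y \<bullet> e + d)"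
  have "Vdiv L u (unext L df k x v e d) = Vdiv L u v + L * (s / L) * ((u - v) \<bullet> e) + L/2 * (s / L)^2"
    using Vdiv_diff_scaleR[OF less_imp_le[OF L], of u v _ e] e
    by (simp add: unext_eq[OF L] s_def y_def a_def n_def)
  also have "\<dots> = Vdiv L u v + s * ((u - v) \<bullet> e) + s^2 / (2 * L)"
    using L by (simp add: power_divide power2_eq_square)
  finally show ?thesis by (simp add: s_def power_mult_distrib mult_ac)
qed

lemma f_xnext_le:
  fixes f :: "real^'n \<Rightarrow> real" and x v e :: "real^'n" and k :: nat
  assumes grad: "\<And>x. (f has_derivative (\<lambda>h. df x \<bullet> h)) (at x)"
    and lip: "\<And>x y. norm (df x - df y) \<le> L * norm (x - y)"
    and L: "L > 0" and e: "norm e = 1"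
  defines "y \<equiv> ynext L df k x v" and "n \<equiv> real CARD('n)"
    and "a \<equiv> alpha CARD('n) (Suc k)" and "A \<equiv> Aseq CARD('n) (Suc k)"
  shows "A * f (xnext L df k x v e d)
    \<le> A * f y - (n * a)^2 / L * (df y \<bullet> e + d) * (df y \<bullet> e) + (n * a)^2 / (2 * L) * (df y \<bullet> e + d)^2"
proof -
  define c where "c = df y \<bullet> e"
  define q where "q = (n * a)^2"
  define t where "t = q * (c + d) / (A * L)"
  have A: "A > 0" unfolding A_def by (simp add: Aseq_Suc_pos)
  have qA: "q \<le> A" unfolding q_def n_def a_def A_def by (rule alpha_Suc_sq_le_Aseq) simp
  have "xnext L df k x v e d = y + (- t) *\<^sub>R e"
    by (simp add: xnext_eq[OF L] t_def q_def c_def y_def a_def n_def A_def)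
  then have "f (xnext L df k x v e d) \<le> f y - t * c + L / 2 * t^2"
    using lipschitz_gradient_quadratic_upper_bound[OF grad lip, of y "- t *\<^sub>R e"] e
    by (simp add: c_def power_mult_distrib)
  then have "A * f (xnext L df k x v e d) \<le> A * (f y - t * c + L / 2 * t^2)"
    using A by simp
  also have "\<dots> = A * f y - q / L * (c + d) * c + q / (2 * L) * (c + d)^2 * (q / A)"
    using A L by (simp add: t_def field_simps power2_eq_square)
  also have "q / (2 * L) * (c + d)^2 * (q / A) \<le> q / (2 * L) * (c + d)^2"
    using qA A L by (intro mult_left_le) (auto simp: q_def)
  finally show ?thesis unfolding q_def c_def by simp
qed

lemma mirror_step_pointwise_bound:
  fixes f :: "real^'n \<Rightarrow> real" and x v u e :: "real^'n" and k :: nat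
  assumes grad: "\<And>x. (f has_derivative (\<lambda>h. df x \<bullet> h)) (at x)"
    and lip: "\<And>x y. norm (df x - df y) \<le> L * norm (x - y)"
    and L: "L > 0" and e: "norm e = 1" and d: "\<bar>d\<bar> \<le> \<delta>"
  defines "y \<equiv> ynext L df k x v" and "n \<equiv> real CARD('n)"
    and "a \<equiv> alpha CARD('n) (Suc k)" and "A \<equiv> Aseq CARD('n) (Suc k)"
  shows "A * f (xnext L df k x v e d) + Vdiv L u (unext L df k x v e d)
    \<le> A * f y + Vdiv L u v + a * n * ((df y \<bullet> e) * ((u - v) \<bullet> e))
      + A / L * \<delta>^2 + A / L * \<delta> * \<bar>df y \<bullet> e\<bar> + a * n * \<delta> * \<bar>(u - v) \<bullet> e\<bar>"
proof -
  define c where "c = df y \<bullet> e"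
  define b where "b = (u - v) \<bullet> e"
  define q where "q = (n * a)^2"
  have n: "n > 0" and a: "a > 0" unfolding n_def a_def by (simp_all add: alpha_Suc_pos)
  have qA: "q \<le> A" unfolding q_def n_def a_def A_def by (rule alpha_Suc_sq_le_Aseq) simp
  have "c * d \<le> \<bar>c\<bar> * \<delta>"
    using abs_ge_self[of "c * d"] mult_left_mono[OF d abs_ge_zero[of c]] unfolding abs_mult by linarith
  moreover have "d^2 \<le> \<delta>^2" using power_mono[OF d abs_ge_zero, of 2] by simp
  ultimately have "(c + d) * d \<le> \<delta> * \<bar>c\<bar> + \<delta>^2"
    by (simp add: algebra_simps power2_eq_square)
  then have "q / L * ((c + d) * d) \<le> q / L * (\<delta> * \<bar>c\<bar> + \<delta>^2)"
    using L by (intro mult_left_mono) (auto simp: q_def)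
  also have "\<dots> \<le> A / L * (\<delta> * \<bar>c\<bar> + \<delta>^2)"
    using qA L d by (intro mult_right_mono divide_right_mono) auto
  finally have noise_c: "q / L * ((c + d) * d) \<le> A / L * \<delta>^2 + A / L * \<delta> * \<bar>c\<bar>"
    by (simp add: distrib_left)
  have "d * b \<le> \<delta> * \<bar>b\<bar>"
    using abs_ge_self[of "d * b"] mult_right_mono[OF d abs_ge_zero[of b]] unfolding abs_mult by linarith
  then have noise_b: "a * n * (d * b) \<le> a * n * \<delta> * \<bar>b\<bar>"
    using a n by (simp add: mult_left_mono mult.assoc)
  have "- q / L * (c + d) * c + 2 * (q / (2 * L) * (c + d)^2) = q / L * ((c + d) * d)"
    using L by (simp add: field_simps power2_eq_square)
  moreover have "a * n * (c + d) * b = a * n * (c * b) + a * n * (d * b)"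
    by (simp add: algebra_simps)
  ultimately show ?thesis
    using f_xnext_le[OF grad lip L e, where k=k and x=x and v=v and d=d]
      Vdiv_unext_eq[OF L e, where df=df and k=k and x=x and v=v and u=u and d=d] noise_c noise_b
    unfolding y_def[symmetric] n_def[symmetric] a_def[symmetric] A_def[symmetric]
      c_def[symmetric] b_def[symmetric] q_def[symmetric]
    by linarith
qed

lemma integral_mirror_step_le:
  fixes f :: "real^'n \<Rightarrow> real" and x v u :: "real^'n" and k :: nat
    and M :: "((real^'n) \<times> real) measure"
  assumes grad: "\<And>x. (f has_derivative (\<lambda>h. df x \<bullet> h)) (at x)"
    and lip: "\<And>x y. norm (df x - df y) \<le> L * norm (x - y)"
    and L: "L > 0"
    and prob: "prob_space M"
    and sets_M: "sets M = sets borel"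
    and sphere: "AE p in M. norm (fst p) = 1"
    and dbound: "AE p in M. \<bar>snd p\<bar> \<le> \<delta>"
    and orth: "\<And>i j. i \<noteq> j \<Longrightarrow> (\<integral>p. fst p $ i * fst p $ j \<partial>M) = 0"
    and var: "\<And>i. (\<integral>p. (fst p $ i)^2 \<partial>M) = 1 / real CARD('n)"
  defines "y \<equiv> ynext L df k x v" and "n \<equiv> real CARD('n)"
    and "a \<equiv> alpha CARD('n) (Suc k)" and "A \<equiv> Aseq CARD('n) (Suc k)"
  shows "A * (\<integral>p. f (xnext L df k x v (fst p) (snd p)) \<partial>M)
      + (\<integral>p. Vdiv L u (unext L df k x v (fst p) (snd p)) \<partial>M)
    \<le> A * f y + Vdiv L u v + a * (df y \<bullet> (u - v)) + A / L * \<delta>^2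
      + A / L * \<delta> * (\<integral>p. \<bar>df y \<bullet> fst p\<bar> \<partial>M) + a * n * \<delta> * (\<integral>p. \<bar>(u - v) \<bullet> fst p\<bar> \<partial>M)"
proof -
  interpret prob_space M by (rule prob)
  note integrable = integrable_continuous_sphere_times_cball[OF prob sets_M sphere dbound]
  define F where "F p = f (xnext L df k x v (fst p) (snd p))" for p :: "(real^'n) \<times> real"
  define V where "V p = Vdiv L u (unext L df k x v (fst p) (snd p))" for p :: "(real^'n) \<times> real"
  define R where "R p = A * f y + Vdiv L u v + a * n * ((df y \<bullet> fst p) * ((u - v) \<bullet> fst p))
    + A / L * \<delta>^2 + A / L * \<delta> * \<bar>df y \<bullet> fst p\<bar> + a * n * \<delta> * \<bar>(u - v) \<bullet> fst p\<bar>"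
    for p :: "(real^'n) \<times> real"
  have coord: "integrable M (\<lambda>p. fst p $ i * fst p $ j)" for i j
    by (rule integrable) (intro continuous_intros)
  have cont_f: "continuous_on UNIV f"
    using grad by (intro continuous_at_imp_continuous_on) (blast intro: has_derivative_continuous)
  have int_F: "integrable M F"
    unfolding F_def xnext_def unext_eq[OF L]
    by (rule integrable, rule continuous_on_compose2[OF cont_f _ subset_UNIV])
      (use L in \<open>intro continuous_intros; simp\<close>)
  have int_V: "integrable M V"
    unfolding V_def unext_eq[OF L] Vdiv_eq_norm[OF less_imp_le[OF L]]
    by (rule integrable) (use L in \<open>intro continuous_intros; simp\<close>)
  have "A * integral\<^sup>L M F + integral\<^sup>L M V = (\<integral>p. A * F p + V p \<partial>M)"
    using int_F int_V by simp
  also have "\<dots> \<le> integral\<^sup>L M R"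
  proof (rule integral_mono_AE)
    show "integrable M R" unfolding R_def by (rule integrable) (intro continuous_intros)
    show "AE p in M. A * F p + V p \<le> R p"
      using sphere dbound
    proof eventually_elim
      case (elim p)
      then show ?case
        unfolding F_def V_def R_def y_def a_def A_def n_def
        by (rule mirror_step_pointwise_bound[OF grad lip L])
    qed
  qed (use int_F int_V in simp)
  also have "\<dots> = A * f y + Vdiv L u v + a * (df y \<bullet> (u - v)) + A / L * \<delta>^2
      + A / L * \<delta> * (\<integral>p. \<bar>df y \<bullet> fst p\<bar> \<partial>M) + a * n * \<delta> * (\<integral>p. \<bar>(u - v) \<bullet> fst p\<bar> \<partial>M)"
    unfolding R_def
    by (simp add: integrable_inner_mult_inner[OF coord] integral_inner_mult_inner[OF coord orth var]
        integrable continuous_intros prob_space n_def)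
  finally show ?thesis unfolding F_def V_def .
qed

lemma mirror_step_expected_bound:
  fixes f :: "real^'n \<Rightarrow> real" and x v u :: "real^'n" and k :: nat
    and M :: "((real^'n) \<times> real) measure"
  assumes grad: "\<And>x. (f has_derivative (\<lambda>h. df x \<bullet> h)) (at x)"
    and lip: "\<And>x y. norm (df x - df y) \<le> L * norm (x - y)"
    and L: "L > 0"
    and prob: "prob_space M"
    and sets_M: "sets M = sets borel"
    and sphere: "AE p in M. norm (fst p) = 1"
    and dbound: "AE p in M. \<bar>snd p\<bar> \<le> \<delta>"
    and orth: "\<And>i j. i \<noteq> j \<Longrightarrow> (\<integral>p. fst p $ i * fst p $ j \<partial>M) = 0"
    and var: "\<And>i. (\<integral>p. (fst p $ i)^2 \<partial>M) = 1 / real CARD('n)"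
  defines "y \<equiv> ynext L df k x v" and "n \<equiv> real CARD('n)"
    and "a \<equiv> alpha CARD('n) (Suc k)" and "A \<equiv> Aseq CARD('n) (Suc k)"
  shows "a * (df y \<bullet> (v - u))
    \<le> A * (f y - (\<integral>p. f (xnext L df k x v (fst p) (snd p)) \<partial>M))
      + Vdiv L u v - (\<integral>p. Vdiv L u (unext L df k x v (fst p) (snd p)) \<partial>M)
      + A / L * \<delta>^2 + A * \<delta> * norm (df y) / (L * sqrt n)
      + a * \<delta> * sqrt n / sqrt L * normL L (v - u)"
proof -
  interpret prob_space M by (rule prob)
  note integrable = integrable_continuous_sphere_times_cball[OF prob sets_M sphere dbound]
  have coord: "integrable M (\<lambda>p. fst p $ i * fst p $ j)" for i j
    by (rule integrable) (intro continuous_intros)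
  have int_abs: "integrable M (\<lambda>p. \<bar>w \<bullet> fst p\<bar>)" for w :: "real^'n"
    by (rule integrable) (intro continuous_intros)
  have abs_moment: "(\<integral>p. \<bar>w \<bullet> fst p\<bar> \<partial>M) \<le> norm w / sqrt n" for w :: "real^'n"
    unfolding n_def by (rule integral_abs_inner_le[OF prob coord orth var int_abs])
  have n: "n > 0" and a: "a > 0" and A: "A > 0"
    unfolding n_def a_def A_def by (simp_all add: alpha_Suc_pos Aseq_Suc_pos)
  have "AE p in M. 0 \<le> \<delta>"
    using dbound by eventually_elim (rule order_trans[OF abs_ge_zero])
  then have \<delta>: "\<delta> \<ge> 0" by simp
  have "A / L * \<delta> * (\<integral>p. \<bar>df y \<bullet> fst p\<bar> \<partial>M) \<le> A * \<delta> * norm (df y) / (L * sqrt n)"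
    using mult_left_mono[OF abs_moment, of "A / L * \<delta>"] A L \<delta> by simp
  moreover have "a * n * \<delta> * (\<integral>p. \<bar>(u - v) \<bullet> fst p\<bar> \<partial>M) \<le> a * \<delta> * sqrt n / sqrt L * normL L (v - u)"
  proof -
    define s where "s = sqrt n"
    have "n = s * s" "s > 0" using n by (auto simp: s_def)
    moreover have "normL L (v - u) = sqrt L * norm (u - v)"
      using L by (simp add: normL_eq_norm norm_minus_commute)
    ultimately show ?thesis
      using mult_left_mono[OF abs_moment, of "a * n * \<delta>"] a L \<delta>
      by (simp add: s_def[symmetric] field_simps)
  qed
  moreover have "a * (df y \<bullet> (u - v)) = - (a * (df y \<bullet> (v - u)))"
    by (simp add: inner_diff_right algebra_simps)
  ultimately show ?thesis
    using integral_mirror_step_le[OF grad lip L prob sets_M sphere dbound orth var, of k x v u]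
    unfolding y_def n_def a_def A_def right_diff_distrib by linarith
qed

theorem corollary3:
  fixes f :: "real^'n \<Rightarrow> real" and df :: "real^'n \<Rightarrow> real^'n"
    and L \<delta> :: real and x0 u :: "real^'n"
    and es :: "nat \<Rightarrow> real^'n" and ds :: "nat \<Rightarrow> real"
    and M :: "((real^'n) \<times> real) measure" and k :: nat
  assumes convex: "convex_on UNIV f"
    and grad: "\<And>x. (f has_derivative (\<lambda>h. df x \<bullet> h)) (at x)"
    and lip: "\<And>x y. norm (df x - df y) \<le> L * norm (x - y)"
    and Lpos: "L > 0"
    and past_e: "\<And>j. j \<in> {1..k} \<Longrightarrow> norm (es j) = 1"
    and past_d: "\<And>j. j \<in> {1..k} \<Longrightarrow> \<bar>ds j\<bar> \<le> \<delta>"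
    and prob: "prob_space M"
    and sets_M: "sets M = sets borel"
    and sphere: "AE p in M. norm (fst p) = 1"
    and dbound: "AE p in M. \<bar>snd p\<bar> \<le> \<delta>"
    and orth: "\<And>i j. i \<noteq> j \<Longrightarrow> (\<integral>p. fst p $ i * fst p $ j \<partial>M) = 0"
    and var: "\<And>i. (\<integral>p. (fst p $ i)^2 \<partial>M) = 1 / real CARD('n)"
  shows
    "let n = CARD('n); xk = fst (traj L df x0 es ds k); uk = snd (traj L df x0 es ds k);
         y = ynext L df k xk uk
     in alpha n (Suc k) * (df y \<bullet> (uk - u))
        \<le> Aseq n (Suc k) * (f y - (\<integral>p. f (xnext L df k xk uk (fst p) (snd p)) \<partial>M))
          + Vdiv L u uk - (\<integral>p. Vdiv L u (unext L df k xk uk (fst p) (snd p)) \<partial>M)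
          + Aseq n (Suc k) / L * \<delta>^2
          + Aseq n (Suc k) * \<delta> * norm (df y) / (L * sqrt (real n))
          + alpha n (Suc k) * \<delta> * sqrt (real n) / sqrt L * normL L (uk - u)"
  \<comment> \<open>The bound holds for every current state \<open>(x\<^sub>k, u\<^sub>k)\<close>.\<close>
  unfolding Let_def
  by (rule mirror_step_expected_bound[OF grad lip Lpos prob sets_M sphere dbound orth var])


end
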